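(* Let $m_1,\dots,m_r,n$ be positive integers with $m=\sum_{i=1}^r m_i\le n$. Suppose that $\sum_{i=1}^r\lfloor m_i n/(m+1)\rfloor<\lfloor mn/(m+1)\rfloor$, or that there is some $i\in[r]$ with $m_i n/(m+1)<\lceil m_i n/(m+2)\rceil$. Then $(m+1)\nmid n$, and neither $K_{m_1 n,\dots,m_r n}$ nor $K_{m_1,\dots,m_r}\times K_n$ is equitably $\lfloor mn/(m+1)\rfloor$-colorable.
   Context: A (proper) $k$-coloring of a graph $G$ is a map $f:V(G)\to\{1,\dots,k\}$ with $f(x)\ne f(y)$ whenever $xy\in E(G)$; an equitable $k$-coloring is a $k$-coloring in which any two color classes differ in size by at most $1$; $G$ is equitably $k$-colorable if it has one. $K_{a_1,\dots,a_r}$ denotes the complete multipartite graph with parts of sizes $a_1,\dots,a_r$; $K_n$ is the complete graph on $n$ vertices. The Kronecker product $G\times H$ has vertex set $V(G)\times V(H)$, with $(x,y)$ adjacent to $(x',y')$ iff $xx'\in E(G)$ and $yy'\in E(H)$. $[r]=\{1,\dots,r\}$. *)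

theory Defs
  imports Complex_Main
begin

text \<open>A (simple) graph is given by a vertex set V and a symmetric irreflexive
adjacency relation E on V.\<close>

definition proper_coloring :: "'a set \<Rightarrow> ('a \<Rightarrow> 'a \<Rightarrow> bool) \<Rightarrow> nat \<Rightarrow> ('a \<Rightarrow> nat) \<Rightarrow> bool" where
  "proper_coloring V E k f \<longleftrightarrow>
     (\<forall>x\<in>V. f x \<in> {1..k}) \<and> (\<forall>x\<in>V. \<forall>y\<in>V. E x y \<longrightarrow> f x \<noteq> f y)"

definition equitable_coloring :: "'a set \<Rightarrow> ('a \<Rightarrow> 'a \<Rightarrow> bool) \<Rightarrow> nat \<Rightarrow> ('a \<Rightarrow> nat) \<Rightarrow> bool" where
  "equitable_coloring V E k f \<longleftrightarrow> proper_coloring V E k f \<and>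
     (\<forall>c\<in>{1..k}. \<forall>d\<in>{1..k}.
        card {x\<in>V. f x = c} \<le> card {x\<in>V. f x = d} + 1)"

definition equitably_colorable :: "'a set \<Rightarrow> ('a \<Rightarrow> 'a \<Rightarrow> bool) \<Rightarrow> nat \<Rightarrow> bool" where
  "equitably_colorable V E k \<longleftrightarrow> (\<exists>f. equitable_coloring V E k f)"

text \<open>Complete multipartite graph K_{a_1,...,a_r}: vertex (i,j) lies in part i
(1 \<le> i \<le> r), j < a i; two vertices are adjacent iff they lie in different parts.\<close>

definition multipartite_V :: "nat \<Rightarrow> (nat \<Rightarrow> nat) \<Rightarrow> (nat \<times> nat) set" where
  "multipartite_V r a = {(i, j). i \<in> {1..r} \<and> j < a i}"

definition multipartite_E :: "(nat \<times> nat) \<Rightarrow> (nat \<times> nat) \<Rightarrow> bool" where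
  "multipartite_E x y \<longleftrightarrow> fst x \<noteq> fst y"

definition complete_V :: "nat \<Rightarrow> nat set" where
  "complete_V n = {0..<n}"

definition complete_E :: "nat \<Rightarrow> nat \<Rightarrow> bool" where
  "complete_E x y \<longleftrightarrow> x \<noteq> y"

definition kron_V :: "'a set \<Rightarrow> 'b set \<Rightarrow> ('a \<times> 'b) set" where
  "kron_V V1 V2 = V1 \<times> V2"

definition kron_E :: "('a \<Rightarrow> 'a \<Rightarrow> bool) \<Rightarrow> ('b \<Rightarrow> 'b \<Rightarrow> bool) \<Rightarrow> ('a \<times> 'b) \<Rightarrow> ('a \<times> 'b) \<Rightarrow> bool" where
  "kron_E E1 E2 p q \<longleftrightarrow> E1 (fst p) (fst q) \<and> E2 (snd p) (snd q)"

end

theory Submission imports Defs begin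

(* Put m = m_1 + ... + m_r and k = floor(mn/(m+1)).  Both graphs have
   mn vertices split into r parts of sizes m_i n, and (m+1)k <= mn <= (m+2)k.
   In an equitable k-coloring every color class therefore has m+1 or m+2 vertices.
   A class with more than m vertices lies inside a single part: in the multipartite
   graph every independent set does, and in K_{m_1,...,m_r} x K_n an independent set
   meeting two parts lies in one copy S x {y} of the m-element multipartite vertex set.
   Hence part i is the union of some t_i classes, so t_i(m+1) <= m_i n <= t_i(m+2)
   and t_1 + ... + t_r = k; we call such data a block splitting.  A block splitting
   forces sum_i floor(m_i n/(m+1)) >= k and ceil(m_i n/(m+2)) <= m_i n/(m+1), which is
   exactly the negation of the hypothesis.  If (m+1) | n then t_i = m_i n/(m+1) is a
   block splitting as well, so the hypothesis also rules out divisibility. *)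

lemma balanced_lower_bound:
  fixes c :: "'b \<Rightarrow> nat"
  assumes fin: "finite J" and bal: "\<forall>i\<in>J. \<forall>j\<in>J. c i \<le> c j + 1"
    and avg: "a * card J \<le> sum c J" and j: "j \<in> J"
  shows "a \<le> c j"
proof (rule ccontr)
  assume "\<not> a \<le> c j"
  then have small: "c j < a" by simp
  then have "\<forall>i\<in>J. c i \<le> a" using bal j by fastforce
  then have rest: "sum c (J - {j}) \<le> (card J - 1) * a"
    using sum_bounded_above[of "J - {j}" c a] fin j by simp
  have "sum c J = c j + sum c (J - {j})" using fin j by (simp add: sum.remove)
  also have "\<dots> < a + (card J - 1) * a" using small rest by linarith
  also have "\<dots> = a * card J" using fin j card_gt_0_iff[of J]
    by (cases "card J") (auto simp: algebra_simps)
  finally show False using avg by simp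
qed

lemma balanced_upper_bound:
  fixes c :: "'b \<Rightarrow> nat"
  assumes fin: "finite J" and bal: "\<forall>i\<in>J. \<forall>j\<in>J. c i \<le> c j + 1"
    and avg: "sum c J \<le> b * card J" and j: "j \<in> J"
  shows "c j \<le> b"
proof (rule ccontr)
  assume "\<not> c j \<le> b"
  then have large: "b < c j" by simp
  then have "\<forall>i\<in>J. b \<le> c i" using bal j by fastforce
  then have rest: "(card J - 1) * b \<le> sum c (J - {j})"
    using sum_bounded_below[of "J - {j}" b c] fin j by simp
  have "b * card J = b + (card J - 1) * b" using fin j card_gt_0_iff[of J]
    by (cases "card J") (auto simp: algebra_simps)
  also have "\<dots> < c j + sum c (J - {j})" using large rest by linarith
  also have "\<dots> = sum c J" using fin j by (simp add: sum.remove)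
  finally show False using avg by simp
qed

lemma quotient_bracket:
  fixes m n k :: nat
  assumes mn: "m \<le> n" and kdef: "k = m * n div (m + 1)" and k1: "k \<ge> 1"
  shows "(m + 1) * k \<le> m * n" and "m * n \<le> (m + 2) * k"
proof -
  show "(m + 1) * k \<le> m * n"
    unfolding kdef by (metis mult.commute div_times_less_eq_dividend)
  define \<rho> where "\<rho> = m * n mod (m + 1)"
  have eq: "m * n = (m + 1) * k + \<rho>"
    unfolding kdef \<rho>_def by (metis div_mult_mod_eq mult.commute)
  have rl: "\<rho> \<le> m" unfolding \<rho>_def
    by (metis Suc_eq_plus1 less_Suc_eq_le mod_less_divisor zero_less_Suc)
  show "m * n \<le> (m + 2) * k"
  proof (cases "m \<le> k")
    case True
    then show ?thesis using eq rl by simp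
  next
    case False
    text \<open>Then n = m, and mn = m^2 leaves remainder 1 modulo m+1.\<close>
    have "m * n < (m + 1) * (k + 1)" using eq rl by simp
    also have "\<dots> \<le> (m + 1) * m" using False by (intro mult_le_mono2) simp
    finally have "m * n < m * (m + 1)" by (simp add: mult.commute)
    then have "n < m + 1" by (metis mult_less_cancel1)
    then have nm: "n = m" using mn by simp
    obtain j where j: "m = Suc j" using False by (cases m) auto
    have "m * n = (m + 1) * j + 1" using nm j by (simp add: algebra_simps)
    then have "\<rho> = 1" unfolding \<rho>_def using j
      by (metis Suc_eq_plus1 add.commute mod_mult_self2 mod_less One_nat_def Suc_less_eq
          zero_less_Suc mult.commute)
    then show ?thesis using eq k1 by simp
  qed
qed

section \<open>Block splittings\<close>

text \<open>The part sizes s_1, ..., s_r admit a splitting into k blocks of size m+1 or m+2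
  that respects the parts: part i receives t_i blocks.\<close>
definition block_splittable :: "nat \<Rightarrow> (nat \<Rightarrow> nat) \<Rightarrow> nat \<Rightarrow> nat \<Rightarrow> bool" where
  "block_splittable r s m k \<longleftrightarrow>
     (\<exists>t. (\<Sum>i=1..r. t i) = k \<and> (\<forall>i\<in>{1..r}. t i * (m + 1) \<le> s i \<and> s i \<le> t i * (m + 2)))"

lemma block_count_bounds:
  fixes s t m :: nat
  assumes lo: "t * (m + 1) \<le> s" and hi: "s \<le> t * (m + 2)"
  shows "t \<le> s div (m + 1)"
    and "of_int \<lceil>real s / real (m + 2)\<rceil> \<le> real s / real (m + 1)"
proof -
  show "t \<le> s div (m + 1)" using lo by (simp add: less_eq_div_iff_mult_less_eq)
  have "real s \<le> real t * real (m + 2)" using hi by (metis of_nat_le_iff of_nat_mult)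
  then have "real s / real (m + 2) \<le> real t" by (simp add: divide_le_eq)
  then have "\<lceil>real s / real (m + 2)\<rceil> \<le> int t" by (simp add: ceiling_le_iff)
  moreover have "real t * real (m + 1) \<le> real s" using lo by (metis of_nat_le_iff of_nat_mult)
  then have "real t \<le> real s / real (m + 1)" by (simp add: le_divide_eq)
  ultimately show "of_int \<lceil>real s / real (m + 2)\<rceil> \<le> real s / real (m + 1)"
    by (metis of_int_le_iff of_int_of_nat_eq order_trans)
qed

lemma block_splitting_excludes_hypothesis:
  assumes "block_splittable r s m k"
  shows "\<not> ((\<Sum>i=1..r. s i div (m + 1)) < k
      \<or> (\<exists>i\<in>{1..r}. real (s i) / real (m + 1) < of_int \<lceil>real (s i) / real (m + 2)\<rceil>))"
proof -
  obtain t where sum_t: "(\<Sum>i=1..r. t i) = k"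
    and blocks: "\<forall>i\<in>{1..r}. t i * (m + 1) \<le> s i \<and> s i \<le> t i * (m + 2)"
    using assms unfolding block_splittable_def by blast
  have "(\<Sum>i=1..r. t i) \<le> (\<Sum>i=1..r. s i div (m + 1))"
    using blocks block_count_bounds(1) by (intro sum_mono) blast
  then have "k \<le> (\<Sum>i=1..r. s i div (m + 1))" using sum_t by simp
  moreover have "\<forall>i\<in>{1..r}. of_int \<lceil>real (s i) / real (m + 2)\<rceil> \<le> real (s i) / real (m + 1)"
    using blocks block_count_bounds(2) by blast
  ultimately show ?thesis by (simp add: not_less)
qed

lemma divisible_block_splittable:
  assumes m: "m = (\<Sum>i=1..r. mm i)" and dvd: "m + 1 dvd n"
  shows "block_splittable r (\<lambda>i. mm i * n) m (m * n div (m + 1))"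
proof -
  obtain d where d: "n = (m + 1) * d" using dvd by blast
  have "(\<Sum>i=1..r. mm i * d) = m * d" unfolding m by (simp add: sum_distrib_right)
  also have "\<dots> = (m + 1) * (m * d) div (m + 1)"
    by (rule nonzero_mult_div_cancel_left[symmetric]) simp
  also have "\<dots> = m * n div (m + 1)" unfolding d by (simp only: mult.left_commute)
  finally have "(\<Sum>i=1..r. mm i * d) = m * n div (m + 1)" .
  moreover have "\<forall>i\<in>{1..r}. mm i * d * (m + 1) \<le> mm i * n \<and> mm i * n \<le> mm i * d * (m + 2)"
    unfolding d by (simp add: algebra_simps)
  ultimately show ?thesis unfolding block_splittable_def by blast
qed

section \<open>From equitable colorings to block splittings\<close>

lemma card_partitioned:
  fixes p :: "'a \<Rightarrow> nat"
  assumes fin: "finite V" and parts: "\<forall>x\<in>V. p x \<in> {1..r}"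
  shows "card V = (\<Sum>i=1..r. card {x\<in>V. p x = i})"
proof -
  have "p ` V \<subseteq> {1..r}" using parts by auto
  then show ?thesis using sum.group[OF fin finite_atLeastAtMost, where g = p and h = "\<lambda>_. 1::nat"] by simp
qed

lemma equitable_class_sizes:
  assumes fin: "finite V" and col: "equitable_coloring V E k f"
    and lo: "(m + 1) * k \<le> card V" and hi: "card V \<le> (m + 2) * k"
    and j: "j \<in> {1..k}"
  shows "m + 1 \<le> card {x\<in>V. f x = j}" and "card {x\<in>V. f x = j} \<le> m + 2"
proof -
  define c where "c j = card {x\<in>V. f x = j}" for j
  have bal: "\<forall>i\<in>{1..k}. \<forall>j\<in>{1..k}. c i \<le> c j + 1"
    using col unfolding equitable_coloring_def c_def by blast
  have "f ` V \<subseteq> {1..k}" using col unfolding equitable_coloring_def proper_coloring_def by auto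
  then have "sum c {1..k} = card V"
    using sum.group[OF fin finite_atLeastAtMost, where g = f and h = "\<lambda>_. 1::nat"] unfolding c_def by simp
  then show "m + 1 \<le> card {x\<in>V. f x = j}" and "card {x\<in>V. f x = j} \<le> m + 2"
    using balanced_lower_bound[OF _ bal, of "m + 1" j] balanced_upper_bound[OF _ bal, of "m + 2" j]
      lo hi j unfolding c_def by (simp_all add: mult.commute)
qed

text \<open>The core counting argument: if moreover every class with more than m vertices
  lies inside one part, the t_i classes inside part i form a block splitting.\<close>
lemma equitable_coloring_block_splittable:
  fixes p :: "'a \<Rightarrow> nat"
  assumes fin: "finite V" and col: "equitable_coloring V E k f"
    and parts: "\<forall>x\<in>V. p x \<in> {1..r}" and sizes: "\<forall>i\<in>{1..r}. card {x\<in>V. p x = i} = s i"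
    and lo: "(m + 1) * k \<le> card V" and hi: "card V \<le> (m + 2) * k"
    and big: "\<forall>x\<in>V. \<forall>y\<in>V. f x = f y \<longrightarrow> m < card {z\<in>V. f z = f x} \<longrightarrow> p x = p y"
  shows "block_splittable r s m k"
proof -
  define cls where "cls j = {x\<in>V. f x = j}" for j
  define P where "P i = {x\<in>V. p x = i}" for i
  have colors: "f ` V \<subseteq> {1..k}"
    using col unfolding equitable_coloring_def proper_coloring_def by blast
  note class_size = equitable_class_sizes[OF fin col lo hi, folded cls_def]
  text \<open>All classes are big, so each lies inside one part.\<close>
  have same_part: "p x = p y" if xy: "x \<in> V" "y \<in> V" "f x = f y" for x y
  proof -
    have "f x \<in> {1..k}" using colors xy(1) by blast
    then have "m + 1 \<le> card (cls (f x))" by (rule class_size(1))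
    then have "m < card {z\<in>V. f z = f x}" unfolding cls_def by simp
    then show ?thesis using big xy by blast
  qed
  have fiber: "{x\<in>P i. f x = j} = cls j" if j: "j \<in> f ` P i" for i j
  proof -
    obtain x0 where x0: "x0 \<in> V" "p x0 = i" "f x0 = j" using j unfolding P_def by blast
    show ?thesis
    proof (intro equalityI subsetI)
      fix x assume "x \<in> {x\<in>P i. f x = j}"
      then show "x \<in> cls j" unfolding P_def cls_def by simp
    next
      fix x assume "x \<in> cls j"
      then have x: "x \<in> V" "f x = f x0" unfolding cls_def using x0 by simp_all
      then have "p x = i" using same_part[OF x(1) x0(1) x(2)] x0(2) by simp
      then show "x \<in> {x\<in>P i. f x = j}" using x x0 unfolding P_def by simp
    qed
  qed
  have finP: "finite (P i)" for i unfolding P_def using fin by simp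
  have used: "f ` P i \<subseteq> {1..k}" for i using colors unfolding P_def by auto
  text \<open>Part i is the union of the t_i classes whose colors it uses.\<close>
  have part_sum: "(\<Sum>j\<in>f ` P i. card (cls j)) = s i" if "i \<in> {1..r}" for i
    using sum.group[where S = "P i" and T = "f ` P i" and g = f and h = "\<lambda>_. 1::nat"]
      fin fiber sizes that unfolding P_def by simp
  have blocks: "card (f ` P i) * (m + 1) \<le> s i \<and> s i \<le> card (f ` P i) * (m + 2)"
    if i: "i \<in> {1..r}" for i
  proof
    have "of_nat (card (f ` P i)) * (m + 1) \<le> (\<Sum>j\<in>f ` P i. card (cls j))"
      by (rule sum_bounded_below) (use class_size(1) used[of i] in blast)
    then show "card (f ` P i) * (m + 1) \<le> s i" using part_sum[OF i] by simp
    have "(\<Sum>j\<in>f ` P i. card (cls j)) \<le> of_nat (card (f ` P i)) * (m + 2)"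
      by (rule sum_bounded_above) (use class_size(2) used[of i] in blast)
    then show "s i \<le> card (f ` P i) * (m + 2)" using part_sum[OF i] by simp
  qed
  have "{1..k} \<subseteq> f ` V"
  proof
    fix j assume "j \<in> {1..k}"
    then have "m + 1 \<le> card (cls j)" by (rule class_size(1))
    then have "card (cls j) \<noteq> 0" by linarith
    then have "cls j \<noteq> {}" by (metis card.empty)
    then show "j \<in> f ` V" unfolding cls_def by blast
  qed
  then have image: "f ` V = {1..k}" using colors by (rule subset_antisym[rotated])
  have parts_cover: "(\<Union>i\<in>{1..r}. P i) = V" using parts unfolding P_def by auto
  have union: "(\<Union>i\<in>{1..r}. f ` P i) = {1..k}"
    by (simp only: image_UN[symmetric] parts_cover image)
  have disjoint: "f ` P i \<inter> f ` P j = {}" if "i \<noteq> j" for i j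
  proof (rule ccontr)
    assume "f ` P i \<inter> f ` P j \<noteq> {}"
    then obtain x y where xy: "x \<in> P i" "y \<in> P j" "f x = f y" by auto
    then have "x \<in> V" "y \<in> V" unfolding P_def by auto
    then have "p x = p y" using xy(3) by (rule same_part)
    then show False using xy that unfolding P_def by simp
  qed
  have "(\<Sum>i=1..r. card (f ` P i)) = card (\<Union>i\<in>{1..r}. f ` P i)"
    by (rule card_UN_disjoint[symmetric]) (use finP disjoint in auto)
  then have "(\<Sum>i=1..r. card (f ` P i)) = k" using union by simp
  then show ?thesis unfolding block_splittable_def using blocks by blast
qed

lemma equitable_parts_block_splittable:
  fixes p :: "'a \<Rightarrow> nat"
  assumes fin: "finite V" and col: "equitable_coloring V E (m * n div (m + 1)) f"
    and parts: "\<forall>x\<in>V. p x \<in> {1..r}" and sizes: "\<forall>i\<in>{1..r}. card {x\<in>V. p x = i} = mm i * n"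
    and m: "m = (\<Sum>i=1..r. mm i)" and mpos: "0 < m" and mn: "m \<le> n"
    and big: "\<forall>x\<in>V. \<forall>y\<in>V. f x = f y \<longrightarrow> m < card {z\<in>V. f z = f x} \<longrightarrow> p x = p y"
  shows "block_splittable r (\<lambda>i. mm i * n) m (m * n div (m + 1))"
proof -
  have cardV: "card V = m * n"
    using card_partitioned[OF fin parts] sizes unfolding m by (simp add: sum_distrib_right)
  then have "V \<noteq> {}" using mpos mn by (metis card.empty mult_is_0 not_gr_zero le_zero_eq)
  then obtain x where "x \<in> V" by blast
  then have "1 \<le> m * n div (m + 1)"
    using col unfolding equitable_coloring_def proper_coloring_def by fastforce
  note bracket = quotient_bracket[OF mn refl this]
  have "(m + 1) * (m * n div (m + 1)) \<le> card V" unfolding cardV by (rule bracket(1))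
  moreover have "card V \<le> (m + 2) * (m * n div (m + 1))" unfolding cardV by (rule bracket(2))
  ultimately show ?thesis by (rule equitable_coloring_block_splittable[OF fin col parts sizes _ _ big])
qed

lemma multipartite_V_Sigma: "multipartite_V r a = (SIGMA i:{1..r}. {..<a i})"
  by (auto simp: multipartite_V_def)

lemma multipartite_part:
  "i \<in> {1..r} \<Longrightarrow> {x \<in> (SIGMA i:{1..r}. {..<a i}). fst x = i} = {i} \<times> {..<a i}"
  by auto

text \<open>K_{m_1 n, ..., m_r n}: same-colored vertices always lie in the same part.\<close>
lemma multipartite_block_splittable:
  assumes m: "m = (\<Sum>i=1..r. mm i)" and mpos: "0 < m" and mn: "m \<le> n"
    and "equitably_colorable (multipartite_V r (\<lambda>i. mm i * n)) multipartite_E (m * n div (m + 1))"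
  shows "block_splittable r (\<lambda>i. mm i * n) m (m * n div (m + 1))"
proof -
  obtain f where f: "equitable_coloring (SIGMA i:{1..r}. {..<mm i * n}) multipartite_E
      (m * n div (m + 1)) f"
    using assms(4) unfolding equitably_colorable_def multipartite_V_Sigma by blast
  show ?thesis
  proof (rule equitable_parts_block_splittable[OF _ f _ _ m mpos mn])
    show "\<forall>x\<in>SIGMA i:{1..r}. {..<mm i * n}. \<forall>y\<in>SIGMA i:{1..r}. {..<mm i * n}.
        f x = f y \<longrightarrow> m < card {z \<in> SIGMA i:{1..r}. {..<mm i * n}. f z = f x} \<longrightarrow> fst x = fst y"
      using f unfolding equitable_coloring_def proper_coloring_def multipartite_E_def by blast
    show "\<forall>i\<in>{1..r}. card {x \<in> SIGMA i:{1..r}. {..<mm i * n}. fst x = i} = mm i * n"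
      using multipartite_part[of _ r "\<lambda>i. mm i * n"] by simp
  qed auto
qed

text \<open>In K_{a_1,...,a_r} x K, a color class meeting two parts lies in one copy
  S x {y} of the multipartite vertex set S, hence has at most |S| vertices.\<close>
lemma kronecker_class_bound:
  fixes S :: "(nat \<times> nat) set" and Y :: "nat set"
  assumes finS: "finite S"
    and col: "proper_coloring (S \<times> Y) (kron_E multipartite_E complete_E) k f"
    and x: "x \<in> S \<times> Y" and y: "y \<in> S \<times> Y"
    and fxy: "f x = f y" and parts: "fst (fst x) \<noteq> fst (fst y)"
  shows "card {z \<in> S \<times> Y. f z = f x} \<le> card S"
proof -
  have indep: "\<not> kron_E multipartite_E complete_E u v"
    if "u \<in> S \<times> Y" "v \<in> S \<times> Y" "f u = f v" for u v
    using col that unfolding proper_coloring_def by blast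
  have same: "fst (fst u) = fst (fst v) \<or> snd u = snd v"
    if "u \<in> S \<times> Y" "v \<in> S \<times> Y" "f u = f v" for u v
    using indep[OF that] unfolding kron_E_def multipartite_E_def complete_E_def by blast
  have "{z \<in> S \<times> Y. f z = f x} \<subseteq> S \<times> {snd x}"
  proof
    fix z assume "z \<in> {z \<in> S \<times> Y. f z = f x}"
    then have z: "z \<in> S \<times> Y" "f z = f x" by auto
    have "snd z = snd x"
      using same[OF z(1) x z(2)] same[OF z(1) y] same[OF x y fxy] z(2) fxy parts by metis
    then show "z \<in> S \<times> {snd x}" using z(1) by (cases z) auto
  qed
  then have "card {z \<in> S \<times> Y. f z = f x} \<le> card (S \<times> {snd x})"
    using finS by (intro card_mono) auto
  then show ?thesis by (simp add: card_cartesian_product)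
qed

lemma kronecker_block_splittable:
  assumes m: "m = (\<Sum>i=1..r. mm i)" and mpos: "0 < m" and mn: "m \<le> n"
    and "equitably_colorable (kron_V (multipartite_V r mm) (complete_V n))
          (kron_E multipartite_E complete_E) (m * n div (m + 1))"
  shows "block_splittable r (\<lambda>i. mm i * n) m (m * n div (m + 1))"
proof -
  let ?S = "SIGMA i:{1..r}. {..<mm i}"
  obtain f where f: "equitable_coloring (?S \<times> {0..<n}) (kron_E multipartite_E complete_E)
      (m * n div (m + 1)) f"
    using assms(4) unfolding equitably_colorable_def multipartite_V_Sigma kron_V_def complete_V_def
    by blast
  have col: "proper_coloring (?S \<times> {0..<n}) (kron_E multipartite_E complete_E) (m * n div (m + 1)) f"
    using f unfolding equitable_coloring_def by blast
  have cardS: "card ?S = m" unfolding m by (simp add: card_SigmaI)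
  have part: "{x \<in> ?S \<times> {0..<n}. fst (fst x) = i} = ({i} \<times> {..<mm i}) \<times> {0..<n}"
    if "i \<in> {1..r}" for i
    using that by auto
  show ?thesis
  proof (rule equitable_parts_block_splittable[OF _ f _ _ m mpos mn])
    show "\<forall>x\<in>?S \<times> {0..<n}. \<forall>y\<in>?S \<times> {0..<n}. f x = f y \<longrightarrow>
        m < card {z \<in> ?S \<times> {0..<n}. f z = f x} \<longrightarrow> fst (fst x) = fst (fst y)"
    proof (intro ballI impI)
      fix x y assume x: "x \<in> ?S \<times> {0..<n}" and y: "y \<in> ?S \<times> {0..<n}" and fxy: "f x = f y"
        and big: "m < card {z \<in> ?S \<times> {0..<n}. f z = f x}"
      show "fst (fst x) = fst (fst y)"
      proof (rule ccontr)
        assume "fst (fst x) \<noteq> fst (fst y)"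
        from kronecker_class_bound[OF _ col x y fxy this] big cardS show False by simp
      qed
    qed
    show "\<forall>i\<in>{1..r}. card {x \<in> ?S \<times> {0..<n}. fst (fst x) = i} = mm i * n"
      using part by (simp add: card_cartesian_product)
  qed auto
qed

theorem mainTheorem5:
  fixes r n :: nat and mm :: "nat \<Rightarrow> nat"
  assumes pos: "\<forall>i\<in>{1..r}. mm i > 0"
    and npos: "n > 0"
    and le: "(\<Sum>i=1..r. mm i) \<le> n"
    and hyp: "(\<Sum>i=1..r. \<lfloor>real (mm i * n) / real ((\<Sum>i=1..r. mm i) + 1)\<rfloor>)
                < \<lfloor>real ((\<Sum>i=1..r. mm i) * n) / real ((\<Sum>i=1..r. mm i) + 1)\<rfloor>
           \<or> (\<exists>i\<in>{1..r}. real (mm i * n) / real ((\<Sum>i=1..r. mm i) + 1)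
                 < of_int \<lceil>real (mm i * n) / real ((\<Sum>i=1..r. mm i) + 2)\<rceil>)"
  shows "\<not> ((\<Sum>i=1..r. mm i) + 1 dvd n)
    \<and> \<not> equitably_colorable (multipartite_V r (\<lambda>i. mm i * n)) multipartite_E
          (nat \<lfloor>real ((\<Sum>i=1..r. mm i) * n) / real ((\<Sum>i=1..r. mm i) + 1)\<rfloor>)
    \<and> \<not> equitably_colorable (kron_V (multipartite_V r mm) (complete_V n))
          (kron_E multipartite_E complete_E)
          (nat \<lfloor>real ((\<Sum>i=1..r. mm i) * n) / real ((\<Sum>i=1..r. mm i) + 1)\<rfloor>)"
proof -
  define m where "m = (\<Sum>i=1..r. mm i)"
  define k where "k = m * n div (m + 1)"
  have k_floor: "\<lfloor>real (m * n) / real (m + 1)\<rfloor> = int k"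
    unfolding k_def floor_divide_of_nat_eq by simp
  have hyp_nat: "(\<Sum>i=1..r. mm i * n div (m + 1)) < k
      \<or> (\<exists>i\<in>{1..r}. real (mm i * n) / real (m + 1) < of_int \<lceil>real (mm i * n) / real (m + 2)\<rceil>)"
  proof -
    have "(\<Sum>i=1..r. \<lfloor>real (mm i * n) / real (m + 1)\<rfloor>) = int (\<Sum>i=1..r. mm i * n div (m + 1))"
      unfolding floor_divide_of_nat_eq by simp
    then show ?thesis using hyp k_floor unfolding m_def[symmetric] by linarith
  qed
  have no_split: "\<not> block_splittable r (\<lambda>i. mm i * n) m k"
    using block_splitting_excludes_hypothesis[of r "\<lambda>i. mm i * n" m k] hyp_nat by blast
  have "r \<noteq> 0"
  proof
    assume "r = 0"
    then show False using hyp_nat unfolding k_def m_def by simp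
  qed
  then have "mm 1 \<le> m" "0 < mm 1"
    unfolding m_def using pos by (auto intro: member_le_sum)
  then have mpos: "0 < m" by simp
  have mn: "m \<le> n" using le unfolding m_def .
  have "\<not> (m + 1 dvd n)"
    using divisible_block_splittable[OF m_def] no_split unfolding k_def by blast
  moreover have "\<not> equitably_colorable (multipartite_V r (\<lambda>i. mm i * n)) multipartite_E k"
    using multipartite_block_splittable[OF m_def mpos mn] no_split unfolding k_def by blast
  moreover have "\<not> equitably_colorable (kron_V (multipartite_V r mm) (complete_V n))
      (kron_E multipartite_E complete_E) k"
    using kronecker_block_splittable[OF m_def mpos mn] no_split unfolding k_def by blast
  ultimately show ?thesis using k_floor unfolding m_def[symmetric] by simp
qed

end
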